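(* Fix $q\in[0,1]$, $p\in(0,1)\setminus\{1/2\}$, an integer $k\geq1$ and $f:[0,1]\to[0,1]$, and let $\{S_n\}$ be the elephant random walk with $k$ extractions without replacement described in the context, with $g$ and $H$ as defined there. Suppose that either (A1) $p>1/2$ and $f(1)<p/(2p-1)$, or (A2) $p<1/2$ and $f(0)<(1-p)/(1-2p)$. If $H$ has a unique fixed point $x^*$ in $[-1,1]$, then $S_n/n\to x^*$ almost surely. Moreover, the same conclusion holds (with $x^*$ the unique fixed point of $H$ in $(-1,1)$) if (A1) or (A2) holds and $H$ satisfies one of: (B1) $H$ is strictly decreasing on $(-1,1)$; (B2) $H$ is strictly convex on $(-1,1)$ or strictly concave on $(-1,1)$; (B3) $H$ is a contraction on $(-1,1)$.
   Context: The model (sampling without replacement, constant sample size $k$): set $X_0=0$ and let $X_1,\dots,X_k$ be i.i.d. with values in $\{\pm1\}$ and $P(X_i=1)=q$. Let $\mathcal{F}_n$ be the $\sigma$-field of all information of the process up to time $n$. For each $n\geq k$, draw an ordered $k$-tuple $(U_{n,1},\dots,U_{n,k})$ of distinct elements of $\{1,\dots,n\}$, uniformly among all such tuples (each with probability $\{\binom{n}{k}k!\}^{-1}$), independently of the past; set $C_n^+=\sum_{i=1}^k\chi\{X_{U_{n,i}}=1\}$, and conditionally on $\mathcal{F}_n$ and the sample let $X_{n+1}=1$ with probability $g(C_n^+/k)$ and $X_{n+1}=-1$ otherwise, where $g(x)=pf(x)+(1-p)\{1-f(x)\}$. Set $S_n=\sum_{i=1}^nX_i$. Define $H(x)=2^{1-k}\sum_{i=0}^{k}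 g(i/k)\binom{k}{i}(1+x)^{i}(1-x)^{k-i}-1$ for $x\in[-1,1]$. *)

theory Defs
  imports "HOL-Probability.Probability"
begin

definition g_fun :: "real \<Rightarrow> (real \<Rightarrow> real) \<Rightarrow> real \<Rightarrow> real" where
  "g_fun p f x = p * f x + (1 - p) * (1 - f x)"

definition H_fun :: "nat \<Rightarrow> (real \<Rightarrow> real) \<Rightarrow> real \<Rightarrow> real" where
  "H_fun k g x = 2 powr (1 - real k) *
     (\<Sum>i = 0..k. g (real i / real k) * real (k choose i) * (1 + x) ^ i * (1 - x) ^ (k - i)) - 1"

definition tuples :: "nat \<Rightarrow> nat \<Rightarrow> (nat \<Rightarrow> nat) set" where
  "tuples k n = {t \<in> {0..<k} \<rightarrow>\<^sub>E {1..n}. inj_on t {0..<k}}"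

text \<open>Conditional probability (given the past path x) that X_{n+1} = 1: average over the
  uniformly chosen ordered sample of g(C_n^+/k).\<close>
definition samp_prob :: "nat \<Rightarrow> nat \<Rightarrow> (real \<Rightarrow> real) \<Rightarrow> (nat \<Rightarrow> real) \<Rightarrow> real" where
  "samp_prob k n g x =
     (\<Sum>t\<in>tuples k n. g (real (card {i \<in> {0..<k}. x (t i) = 1}) / real k)) / real (card (tuples k n))"

definition strictly_convex_on :: "real set \<Rightarrow> (real \<Rightarrow> real) \<Rightarrow> bool" where
  "strictly_convex_on S h \<longleftrightarrow> (\<forall>x\<in>S. \<forall>y\<in>S. \<forall>t. x \<noteq> y \<and> 0 < t \<and> t < 1 \<longrightarrow>
      h (t * x + (1 - t) * y) < t * h x + (1 - t) * h y)"

definition strictly_concave_on :: "real set \<Rightarrow> (real \<Rightarrow> real) \<Rightarrow> bool" where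
  "strictly_concave_on S h \<longleftrightarrow> strictly_convex_on S (\<lambda>x. - h x)"

definition contraction_on :: "real set \<Rightarrow> (real \<Rightarrow> real) \<Rightarrow> bool" where
  "contraction_on S h \<longleftrightarrow> (\<exists>c<1. \<forall>x\<in>S. \<forall>y\<in>S. \<bar>h x - h y\<bar> \<le> c * \<bar>x - y\<bar>)"

end

theory Submission
  imports Defs
begin

text \<open>
  Write \<open>X (n+1) = (2 Z n - 1) + D n\<close>, where \<open>Z n = samp_prob k n g\<close> is the conditional
  probability that \<open>X (n+1) = 1\<close> given the past. The \<open>D n\<close> are martingale differences bounded
  by 2, so \<open>E (D 1 + ... + D n)^4 = O(n^2)\<close>, and summing the fourth moments of the averages gives
  \<open>(D 1 + ... + D n) / n \<longrightarrow> 0\<close> almost surely. For a sample drawn with replacement the number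
  of \<open>+1\<close>'s would be binomial and \<open>2 Z n - 1\<close> would be exactly \<open>H (S n / n)\<close>; the ordered samples
  with a repeated index are a fraction \<open>1 - (\<Prod>l<k. 1 - l/n)\<close> of all \<open>n^k\<close>, so
  \<open>2 Z n - 1 = H (S n / n) + o(1)\<close>. Hence \<open>y n = S n / n\<close> follows the perturbed recursion
  \<open>y (n+1) = y n + (H (y n) - y n + o(1)) / (n+1)\<close>.

  As \<open>0 < p < 1\<close> and \<open>f\<close> maps \<open>[0,1]\<close> into itself, \<open>0 < g < 1\<close>, hence \<open>H 1 < 1\<close> and \<open>-1 < H (-1)\<close>.
  If \<open>x*\<close> is the only fixed point, then outside any neighbourhood of \<open>x*\<close> the drift \<open>H y - y\<close> is
  bounded away from 0 and points towards \<open>x*\<close>; since the harmonic series diverges, \<open>y n\<close> enters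
  the neighbourhood and stays there. A fixed point in \<open>(-1,1)\<close> exists by the intermediate value
  theorem, and each of (B1)-(B3) excludes a second one.
\<close>

section \<open>Deterministic convergence of perturbed averages\<close>

lemma eventually_le_of_harmonic_descent:
  fixes w :: "nat \<Rightarrow> real"
  assumes c: "c > 0"
    and descent: "\<And>n. N \<le> n \<Longrightarrow> T < w n \<Longrightarrow> w (Suc n) \<le> w n - c / real (Suc n)"
    and trap: "\<And>n. N \<le> n \<Longrightarrow> w n \<le> T \<Longrightarrow> w (Suc n) \<le> T"
  shows "eventually (\<lambda>n. w n \<le> T) sequentially"
proof -
  have "\<exists>m\<ge>N. w m \<le> T"
  proof (rule ccontr)
    assume "\<not> ?thesis"
    then have above: "T < w (N + i)" for i
      by (metis le_add1 not_le)
    have partial_sums: "(\<Sum>i<n. c / real (Suc (N + i))) \<le> w N - T" for n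
    proof -
      have "c / real (Suc (N + i)) \<le> w (N + i) - w (N + Suc i)" for i
        using descent[of "N + i"] above[of i] by simp
      then have "(\<Sum>i<n. c / real (Suc (N + i))) \<le> (\<Sum>i<n. w (N + i) - w (N + Suc i))"
        by (intro sum_mono)
      also have "\<dots> = w N - w (N + n)"
        using sum_lessThan_telescope'[of "\<lambda>i. w (N + i)"] by simp
      finally show ?thesis using above[of n] by simp
    qed
    have "summable (\<lambda>i. c / real (Suc (N + i)))"
      using c partial_sums by (intro summableI_nonneg_bounded) auto
    then have "summable (\<lambda>i. inverse (real (i + Suc N)))"
      using c summable_cmult_iff[of c "\<lambda>i. inverse (real (i + Suc N))"]
      by (simp add: divide_inverse add.commute)
    then have "summable (\<lambda>i. inverse (real i))"
      using summable_iff_shift[of "\<lambda>i. inverse (real i)" "Suc N"] by simp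
    then show False
      using not_summable_harmonic[where 'a = real] by simp
  qed
  then obtain m where m: "N \<le> m" "w m \<le> T" by blast
  have "w n \<le> T" if "m \<le> n" for n
    using that
  proof (induction n rule: dec_induct)
    case (step n)
    then show ?case using trap m(1) by simp
  qed (use m in simp)
  then show ?thesis unfolding eventually_sequentially by blast
qed

lemma average_Suc_le:
  fixes W :: "nat \<Rightarrow> real"
  assumes "1 \<le> n" and "W (Suc n) - W n \<le> W n / real n + d"
  shows "W (Suc n) / real (Suc n) \<le> W n / real n + d / real (Suc n)"
proof -
  define w where "w = W n / real n"
  have "W n = real n * w" using assms(1) by (simp add: w_def)
  moreover have "W (Suc n) - W n \<le> w + d" using assms(2) by (simp add: w_def)
  ultimately have "W (Suc n) \<le> real (Suc n) * w + d" by (simp add: algebra_simps)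
  then have "W (Suc n) / real (Suc n) \<le> (real (Suc n) * w + d) / real (Suc n)"
    by (rule divide_right_mono) simp
  then show ?thesis by (simp add: add_divide_distrib w_def)
qed

lemma eventually_average_le_of_drift:
  fixes W :: "nat \<Rightarrow> real"
  assumes c: "c > 0" and \<epsilon>: "\<epsilon> > 0"
    and bounded: "\<And>n. W (Suc n) - W n \<le> B"
    and drift: "\<And>n. N \<le> n \<Longrightarrow> T - \<epsilon> \<le> W n / real n \<Longrightarrow> W (Suc n) - W n \<le> W n / real n - c"
  shows "eventually (\<lambda>n. W n / real n \<le> T) sequentially"
proof -
  define w where "w n = W n / real n" for n
  obtain N0 :: nat where N0: "(B - T) / \<epsilon> \<le> real N0"
    using real_arch_simple by blast
  define N' where "N' = max (max N 1) N0"
  have N': "N \<le> N'" "1 \<le> N'" "N0 \<le> N'" by (auto simp: N'_def)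
  have decrease: "w (Suc n) \<le> w n - c / real (Suc n)" if "N' \<le> n" "T - \<epsilon> \<le> w n" for n
    using average_Suc_le[of n W "- c"] drift[of n] N' that by (simp add: w_def)
  show ?thesis unfolding w_def[symmetric]
  proof (rule eventually_le_of_harmonic_descent[OF c, of N'])
    show "w (Suc n) \<le> w n - c / real (Suc n)" if "N' \<le> n" "T < w n" for n
      using that \<epsilon> by (intro decrease) auto
  next
    fix n assume n: "N' \<le> n" and "w n \<le> T"
    show "w (Suc n) \<le> T"
    proof (cases "T - \<epsilon> \<le> w n")
      case True
      moreover have "0 \<le> c / real (Suc n)" using c by simp
      ultimately show ?thesis using decrease[OF n] \<open>w n \<le> T\<close> by linarith
    next
      case False
      have "(B - T) / \<epsilon> \<le> real n" using N0 N'(3) n by linarith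
      then have "B - T \<le> real n * \<epsilon>" using \<epsilon> by (simp add: pos_divide_le_eq)
      then have "real n * w n + B \<le> (real n + 1) * T"
        using False mult_left_mono[of "w n" "T - \<epsilon>" "real n"] by (simp add: algebra_simps)
      moreover have "w (Suc n) \<le> w n + (B - w n) / real (Suc n)"
        using average_Suc_le[of n W "B - w n"] bounded[of n] N' n by (simp add: w_def)
      ultimately have "real (Suc n) * w (Suc n) \<le> real (Suc n) * T"
        by (simp add: field_simps)
      then show ?thesis by (simp only: mult_le_cancel_left_pos of_nat_0_less_iff zero_less_Suc)
    qed
  qed
qed

lemma eventually_le_of_drift:
  fixes y W :: "nat \<Rightarrow> real"
  assumes close: "(\<lambda>n. W n / real n - y n) \<longlonglongrightarrow> 0"
    and bounded: "\<And>n. W (Suc n) - W n \<le> B"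
    and drift: "\<And>\<delta>. \<delta> > 0 \<Longrightarrow>
      \<exists>c>0. eventually (\<lambda>n. a + \<delta> \<le> y n \<longrightarrow> W (Suc n) - W n \<le> y n - c) sequentially"
    and \<delta>: "\<delta> > 0"
  shows "eventually (\<lambda>n. y n \<le> a + \<delta>) sequentially"
proof -
  obtain c where c: "c > 0"
    and drift': "eventually (\<lambda>n. a + \<delta>/2 \<le> y n \<longrightarrow> W (Suc n) - W n \<le> y n - c) sequentially"
    using drift[of "\<delta>/2"] \<delta> by auto
  define \<eta> where "\<eta> = min (c/2) (\<delta>/8)"
  have \<eta>: "0 < \<eta>" "\<eta> \<le> c/2" "\<eta> \<le> \<delta>/8" using c \<delta> by (auto simp: \<eta>_def)
  have "eventually (\<lambda>n. \<bar>W n / real n - y n\<bar> < \<eta>) sequentially"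
    using tendstoD[OF close \<eta>(1)] by (simp add: dist_real_def)
  with drift' have "eventually (\<lambda>n. (a + \<delta>/2 \<le> y n \<longrightarrow> W (Suc n) - W n \<le> y n - c) \<and>
      \<bar>W n / real n - y n\<bar> < \<eta>) sequentially"
    by (rule eventually_conj)
  then obtain N where N: "\<And>n. N \<le> n \<Longrightarrow>
      (a + \<delta>/2 \<le> y n \<longrightarrow> W (Suc n) - W n \<le> y n - c) \<and> \<bar>W n / real n - y n\<bar> < \<eta>"
    unfolding eventually_sequentially by blast
  have "eventually (\<lambda>n. W n / real n \<le> a + 3*\<delta>/4) sequentially"
  proof (rule eventually_average_le_of_drift[where c = "c/2" and \<epsilon> = "\<delta>/8" and N = N])
    fix n assume "N \<le> n" "a + 3*\<delta>/4 - \<delta>/8 \<le> W n / real n"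
    then show "W (Suc n) - W n \<le> W n / real n - c/2"
      using N[of n] \<eta> by auto
  qed (use c \<delta> bounded in auto)
  then show ?thesis
    using eventually_ge_at_top[of N] by eventually_elim (use N \<eta> in force)
qed

lemma tendsto_of_drift:
  fixes y W :: "nat \<Rightarrow> real"
  assumes close: "(\<lambda>n. W n / real n - y n) \<longlonglongrightarrow> 0"
    and bounded: "\<And>n. \<bar>W (Suc n) - W n\<bar> \<le> B"
    and drift_down: "\<And>\<delta>. \<delta> > 0 \<Longrightarrow>
      \<exists>c>0. eventually (\<lambda>n. a + \<delta> \<le> y n \<longrightarrow> W (Suc n) - W n \<le> y n - c) sequentially"
    and drift_up: "\<And>\<delta>. \<delta> > 0 \<Longrightarrow>
      \<exists>c>0. eventually (\<lambda>n. y n \<le> a - \<delta> \<longrightarrow> y n + c \<le> W (Suc n) - W n) sequentially"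
  shows "y \<longlonglongrightarrow> a"
proof (rule order_tendstoI)
  fix b assume "a < b"
  have "eventually (\<lambda>n. y n \<le> a + (b - a)/2) sequentially"
    using eventually_le_of_drift[OF close _ drift_down, of B "(b - a)/2"] bounded abs_le_D1 \<open>a < b\<close>
    by auto
  then show "eventually (\<lambda>n. y n < b) sequentially"
    by (rule eventually_mono) (use \<open>a < b\<close> in \<open>simp add: field_simps\<close>)
next
  fix b assume "b < a"
  have "eventually (\<lambda>n. - y n \<le> - a + (a - b)/2) sequentially"
  proof (rule eventually_le_of_drift[where W = "\<lambda>n. - W n" and B = B])
    show "(\<lambda>n. - W n / real n - - y n) \<longlonglongrightarrow> 0"
      using tendsto_minus[OF close] by simp
    show "- W (Suc n) - - W n \<le> B" for n using bounded[of n] by linarith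
    show "\<exists>c>0. eventually (\<lambda>n. - a + \<delta> \<le> - y n \<longrightarrow> - W (Suc n) - - W n \<le> - y n - c) sequentially"
      if "\<delta> > 0" for \<delta>
      using drift_up[OF that] by (auto elim!: eventually_mono)
  qed (use \<open>b < a\<close> in simp)
  then show "eventually (\<lambda>n. b < y n) sequentially"
    by (rule eventually_mono) (use \<open>b < a\<close> in \<open>simp add: field_simps\<close>)
qed

section \<open>The response function and maps pointing inward at the boundary\<close>

lemma g_fun_bounds:
  assumes "0 < p" "p < 1" and "f x \<in> {0..1}"
  shows "0 < g_fun p f x" "g_fun p f x < 1"
proof -
  have f: "0 \<le> f x" "f x \<le> 1" using assms(3) by auto
  have "min p (1 - p) * f x + min p (1 - p) * (1 - f x) \<le> g_fun p f x"
    unfolding g_fun_def using f by (intro add_mono mult_right_mono) auto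
  then show "0 < g_fun p f x" using assms(1,2) by (simp add: algebra_simps)
  have "g_fun p f x \<le> max p (1 - p) * f x + max p (1 - p) * (1 - f x)"
    unfolding g_fun_def using f by (intro add_mono mult_right_mono) auto
  then show "g_fun p f x < 1" using assms(1,2) by (simp add: algebra_simps)
qed

lemma continuous_on_H_fun: "continuous_on S (H_fun k G)"
  unfolding H_fun_def by (intro continuous_intros)

lemma two_powr_1_minus: "(2::real) powr (1 - real k) = 2 / 2 ^ k"
  by (simp add: powr_diff powr_realpow)

lemma H_fun_one:
  assumes "k \<ge> 1"
  shows "H_fun k G 1 = 2 * G 1 - 1"
proof -
  have "(\<Sum>i = 0..<k. G (real i / real k) * real (k choose i) * 2 ^ i * (0::real) ^ (k - i)) = 0"
    by (intro sum.neutral) auto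
  then show ?thesis
    using assms by (simp add: H_fun_def sum.last_plus two_powr_1_minus mult.commute)
qed

lemma H_fun_minus_one: "H_fun k G (-1) = 2 * G 0 - 1"
proof -
  have "(\<Sum>i = Suc 0..k. G (real i / real k) * real (k choose i) * (0::real) ^ i * 2 ^ (k - i)) = 0"
    by (intro sum.neutral) auto
  then show ?thesis
    by (simp add: H_fun_def sum.atLeast_Suc_atMost two_powr_1_minus mult.commute)
qed

lemma g_fun_grid_in_unit:
  assumes "0 < p" "p < 1" and f: "\<forall>x\<in>{0..1}. f x \<in> {0..1}" and "j \<le> k"
  shows "g_fun p f (real j / real k) \<in> {0..1}"
proof -
  have "real j / real k \<in> {0..1}" using \<open>j \<le> k\<close> by (cases "k = 0") auto
  then show ?thesis using g_fun_bounds[OF assms(1,2)] f by (auto simp: less_imp_le)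
qed

locale inward_map =
  fixes h :: "real \<Rightarrow> real"
  assumes continuous: "continuous_on {-1..1} h"
    and below_at_one: "h 1 < 1"
    and above_at_minus_one: "-1 < h (-1)"
begin

lemma inward_map_reflection: "inward_map (\<lambda>x. - h (- x))"
proof
  have "continuous_on {-1..1} (h \<circ> uminus)"
    by (intro continuous_on_compose continuous_intros continuous_on_subset[OF continuous]) auto
  then show "continuous_on {-1..1} (\<lambda>x. - h (- x))"
    by (intro continuous_intros) (simp add: comp_def)
qed (use below_at_one above_at_minus_one in auto)

lemma fixed_point_exists: "\<exists>z\<in>{-1<..<1}. h z = z"
proof -
  have "continuous_on {-1..1} (\<lambda>y. y - h y)" by (intro continuous_intros continuous)
  then obtain z where z: "-1 \<le> z" "z \<le> 1" "z - h z = 0"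
    using IVT'[of "\<lambda>y. y - h y" "-1" 0 1] below_at_one above_at_minus_one by auto
  then have "z \<noteq> 1" "z \<noteq> -1" using below_at_one above_at_minus_one by auto
  then show ?thesis using z by (intro bexI[of _ z]) auto
qed

lemma fixed_point_in_interior:
  assumes "y \<in> {-1..1}" "h y = y"
  shows "y \<in> {-1<..<1}"
proof -
  have "y \<noteq> 1" "y \<noteq> -1" using assms(2) below_at_one above_at_minus_one by auto
  then show ?thesis using assms(1) by auto
qed

lemma drift_above_fixed_point:
  assumes xs: "xs \<in> {-1..1}" and unique: "\<forall>y\<in>{-1..1}. h y = y \<longrightarrow> y = xs" and "\<delta> > 0"
  shows "\<exists>c>0. \<forall>y\<in>{-1..1}. xs + \<delta> \<le> y \<longrightarrow> h y \<le> y - c"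
proof (cases "xs + \<delta> \<le> 1")
  case False
  then show ?thesis by (intro exI[of _ 1]) auto
next
  case True
  have gap_continuous: "continuous_on {xs+\<delta>..1} (\<lambda>y. y - h y)"
    by (intro continuous_intros continuous_on_subset[OF continuous]) (use xs \<open>\<delta> > 0\<close> in auto)
  obtain y0 where y0: "y0 \<in> {xs+\<delta>..1}" and min: "\<forall>y\<in>{xs+\<delta>..1}. y0 - h y0 \<le> y - h y"
    using continuous_attains_inf[OF compact_Icc _ gap_continuous] True by auto
  have "0 < y0 - h y0"
  proof (rule ccontr)
    assume "\<not> 0 < y0 - h y0"
    then have le: "y0 - h y0 \<le> 0" by simp
    have "continuous_on {y0..1} (\<lambda>y. y - h y)"
      by (intro continuous_intros continuous_on_subset[OF continuous]) (use y0 xs \<open>\<delta> > 0\<close> in auto)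
    then obtain z where z: "y0 \<le> z" "z \<le> 1" "z - h z = 0"
      using IVT'[of "\<lambda>y. y - h y" y0 0 1, OF le] below_at_one y0 by auto
    then have "z = xs" using unique y0 xs \<open>\<delta> > 0\<close> by auto
    then show False using z y0 \<open>\<delta> > 0\<close> by auto
  qed
  moreover have "h y \<le> y - (y0 - h y0)" if "y \<in> {-1..1}" "xs + \<delta> \<le> y" for y
  proof -
    have "y \<in> {xs+\<delta>..1}" using that by auto
    then show ?thesis using min by fastforce
  qed
  ultimately show ?thesis by blast
qed

lemma drift_below_fixed_point:
  assumes xs: "xs \<in> {-1..1}" and unique: "\<forall>y\<in>{-1..1}. h y = y \<longrightarrow> y = xs" and "\<delta> > 0"
  shows "\<exists>c>0. \<forall>y\<in>{-1..1}. y \<le> xs - \<delta> \<longrightarrow> y + c \<le> h y"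
proof -
  have "\<forall>y\<in>{-1..1}. - h (- y) = y \<longrightarrow> y = - xs"
  proof (intro ballI impI)
    fix y assume "y \<in> {-1..1}" "- h (- y) = y"
    then have "h (- y) = - y" "- y \<in> {-1..1}" by auto
    then have "- y = xs" using unique by blast
    then show "y = - xs" by simp
  qed
  then obtain c where "c > 0" and c: "\<forall>y\<in>{-1..1}. - xs + \<delta> \<le> y \<longrightarrow> - h (- y) \<le> y - c"
    using inward_map.drift_above_fixed_point[OF inward_map_reflection, of "- xs" \<delta>] xs \<open>\<delta> > 0\<close>
    by auto
  have "y + c \<le> h y" if "y \<in> {-1..1}" "y \<le> xs - \<delta>" for y
    using c[rule_format, of "- y"] that by auto
  then show ?thesis using \<open>c > 0\<close> by blast
qed

lemma below_diagonal_near_one: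
  assumes "b < 1"
  shows "\<exists>v. b < v \<and> v < 1 \<and> h v < v"
proof -
  have "((\<lambda>y. h y - y) \<longlongrightarrow> h 1 - 1) (at 1 within {-1..1})"
    using continuous by (intro tendsto_intros) (auto simp: continuous_on_def)
  then have "eventually (\<lambda>y. h y - y < 0) (at 1 within {-1..1})"
    using below_at_one by (intro order_tendstoD) auto
  then obtain d where "d > 0" and d: "\<forall>y\<in>{-1..1}. y \<noteq> 1 \<and> dist y 1 < d \<longrightarrow> h y - y < 0"
    unfolding eventually_at by blast
  define v where "v = max (max ((b + 1)/2) (1 - d/2)) 0"
  have v: "b < v" "v < 1" "0 \<le> v" "1 - v < d"
    using assms \<open>d > 0\<close> unfolding v_def by (auto split: split_max)
  then have "h v - v < 0" using d by (auto simp: dist_real_def)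
  then show ?thesis using v by (intro exI[of _ v]) auto
qed

lemma fixed_point_unique_if_strict_antimono:
  assumes "strict_antimono_on {-1<..<1} h"
    and "a \<in> {-1<..<1}" "h a = a" "b \<in> {-1<..<1}" "h b = b"
  shows "a = b"
proof (cases a b rule: linorder_cases)
  case less
  then have "h b < h a" using assms(1,2,4) unfolding monotone_on_def by blast
  then show ?thesis using assms less by simp
next
  case greater
  then have "h a < h b" using assms(1,2,4) unfolding monotone_on_def by blast
  then show ?thesis using assms greater by simp
qed

lemma fixed_point_unique_if_contraction:
  assumes "contraction_on {-1<..<1} h"
    and "a \<in> {-1<..<1}" "h a = a" "b \<in> {-1<..<1}" "h b = b"
  shows "a = b"
proof -
  obtain c where "c < 1" and c: "\<forall>x\<in>{-1<..<1}. \<forall>y\<in>{-1<..<1}. \<bar>h x - h y\<bar> \<le> c * \<bar>x - y\<bar>"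
    using assms(1) unfolding contraction_on_def by blast
  then have "\<bar>h a - h b\<bar> \<le> c * \<bar>a - b\<bar>" using assms(2,4) by blast
  then have "(1 - c) * \<bar>a - b\<bar> \<le> 0" using assms by (simp add: algebra_simps)
  then show ?thesis using \<open>c < 1\<close> by (simp add: mult_le_0_iff)
qed

text \<open>The chord from \<open>(a, a)\<close> to a point \<open>(v, h v)\<close> below the diagonal near \<open>1\<close> passes
  strictly below \<open>(b, b)\<close>.\<close>
lemma no_larger_fixed_point_if_strictly_convex:
  assumes convex: "strictly_convex_on {-1<..<1} h"
    and a: "a \<in> {-1<..<1}" "h a = a" and b: "b \<in> {-1<..<1}" "h b = b" and "a < b"
  shows False
proof -
  obtain v where v: "b < v" "v < 1" "h v < v"
    using below_diagonal_near_one b by auto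
  define t where "t = (v - b) / (v - a)"
  have t: "0 < t" "t < 1" using v \<open>a < b\<close> by (auto simp: t_def field_simps)
  have "v - a \<noteq> 0" using v \<open>a < b\<close> by simp
  then have "t * (v - a) = v - b" by (simp add: t_def)
  then have b_eq: "t * a + (1 - t) * v = b"
    by (simp add: algebra_simps)
  have "h (t * a + (1 - t) * v) < t * h a + (1 - t) * h v"
    by (intro convex[unfolded strictly_convex_on_def, rule_format]) (use a b v t in auto)
  also have "\<dots> < t * a + (1 - t) * v" using a v t by (simp add: mult_strict_left_mono)
  finally show False using b_eq b by simp
qed

lemma fixed_point_unique_if_strictly_convex:
  assumes "strictly_convex_on {-1<..<1} h"
    and "a \<in> {-1<..<1}" "h a = a" "b \<in> {-1<..<1}" "h b = b"
  shows "a = b"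
proof (cases a b rule: linorder_cases)
  case less
  then show ?thesis using no_larger_fixed_point_if_strictly_convex[OF assms] by blast
next
  case greater
  then show ?thesis
    using no_larger_fixed_point_if_strictly_convex[OF assms(1) assms(4,5) assms(2,3)] by blast
qed

lemma fixed_point_unique_if_strictly_concave:
  assumes concave: "strictly_concave_on {-1<..<1} h"
    and "a \<in> {-1<..<1}" "h a = a" "b \<in> {-1<..<1}" "h b = b"
  shows "a = b"
proof -
  have reflection_convex: "strictly_convex_on {-1<..<1} (\<lambda>x. - h (- x))"
    unfolding strictly_convex_on_def
  proof (intro ballI allI impI)
    fix x y t :: real assume "x \<in> {-1<..<1}" "y \<in> {-1<..<1}" "x \<noteq> y \<and> 0 < t \<and> t < 1"
    then have "- h (t * - x + (1 - t) * - y) < t * - h (- x) + (1 - t) * - h (- y)"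
      by (intro concave[unfolded strictly_concave_on_def strictly_convex_on_def, rule_format]) auto
    then show "- h (- (t * x + (1 - t) * y)) < t * - h (- x) + (1 - t) * - h (- y)"
      by (simp add: algebra_simps)
  qed
  have "- a = - b"
    by (rule inward_map.fixed_point_unique_if_strictly_convex[OF inward_map_reflection
          reflection_convex]) (use assms(2-) in auto)
  then show ?thesis by simp
qed

lemma interior_fixed_point_unique:
  assumes "strict_antimono_on {-1<..<1} h \<or> strictly_convex_on {-1<..<1} h
      \<or> strictly_concave_on {-1<..<1} h \<or> contraction_on {-1<..<1} h"
    and "a \<in> {-1<..<1}" "h a = a" "b \<in> {-1<..<1}" "h b = b"
  shows "a = b"
  using assms(1)
proof (elim disjE)
  assume "strict_antimono_on {-1<..<1} h"
  then show ?thesis using fixed_point_unique_if_strict_antimono assms(2-) by blast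
next
  assume "strictly_convex_on {-1<..<1} h"
  then show ?thesis using fixed_point_unique_if_strictly_convex assms(2-) by blast
next
  assume "strictly_concave_on {-1<..<1} h"
  then show ?thesis using fixed_point_unique_if_strictly_concave assms(2-) by blast
next
  assume "contraction_on {-1<..<1} h"
  then show ?thesis using fixed_point_unique_if_contraction assms(2-) by blast
qed

lemma unique_fixed_point_exists:
  assumes "strict_antimono_on {-1<..<1} h \<or> strictly_convex_on {-1<..<1} h
      \<or> strictly_concave_on {-1<..<1} h \<or> contraction_on {-1<..<1} h"
  shows "\<exists>z\<in>{-1<..<1}. h z = z \<and> (\<forall>y\<in>{-1..1}. h y = y \<longrightarrow> y = z)"
proof -
  obtain z where z: "z \<in> {-1<..<1}" "h z = z" using fixed_point_exists by blast
  have "y = z" if "y \<in> {-1..1}" "h y = y" for y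
    using interior_fixed_point_unique[OF assms fixed_point_in_interior[OF that] that(2) z] .
  then show ?thesis using z by blast
qed

lemma tendsto_fixed_point_of_perturbed_recursion:
  fixes y W :: "nat \<Rightarrow> real"
  assumes range: "\<And>n. y n \<in> {-1..1}"
    and close: "(\<lambda>n. W n / real n - y n) \<longlonglongrightarrow> 0"
    and bounded: "\<And>n. \<bar>W (Suc n) - W n\<bar> \<le> B"
    and recursion: "(\<lambda>n. W (Suc n) - W n - h (y n)) \<longlonglongrightarrow> 0"
    and xs: "xs \<in> {-1..1}" and unique: "\<forall>y\<in>{-1..1}. h y = y \<longrightarrow> y = xs"
  shows "y \<longlonglongrightarrow> xs"
proof (rule tendsto_of_drift[where W = W and B = B, OF close bounded])
  fix \<delta> :: real assume "\<delta> > 0"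
  then obtain c where "c > 0" and c: "\<forall>y\<in>{-1..1}. xs + \<delta> \<le> y \<longrightarrow> h y \<le> y - c"
    using drift_above_fixed_point[OF xs unique] by blast
  have "eventually (\<lambda>n. W (Suc n) - W n - h (y n) < c/2) sequentially"
    using order_tendstoD(2)[OF recursion, of "c/2"] \<open>c > 0\<close> by simp
  then have "eventually (\<lambda>n. xs + \<delta> \<le> y n \<longrightarrow> W (Suc n) - W n \<le> y n - c/2) sequentially"
  proof (rule eventually_mono)
    fix n
    have "xs + \<delta> \<le> y n \<longrightarrow> h (y n) \<le> y n - c" using c range by blast
    then show "W (Suc n) - W n - h (y n) < c/2 \<Longrightarrow> xs + \<delta> \<le> y n \<longrightarrow> W (Suc n) - W n \<le> y n - c/2" by auto
  qed
  then show "\<exists>c>0. eventually (\<lambda>n. xs + \<delta> \<le> y n \<longrightarrow> W (Suc n) - W n \<le> y n - c) sequentially"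
    using \<open>c > 0\<close> by (intro exI[of _ "c/2"]) auto
next
  fix \<delta> :: real assume "\<delta> > 0"
  then obtain c where "c > 0" and c: "\<forall>y\<in>{-1..1}. y \<le> xs - \<delta> \<longrightarrow> y + c \<le> h y"
    using drift_below_fixed_point[OF xs unique] by blast
  have "eventually (\<lambda>n. - (c/2) < W (Suc n) - W n - h (y n)) sequentially"
    using order_tendstoD(1)[OF recursion, of "- (c/2)"] \<open>c > 0\<close> by simp
  then have "eventually (\<lambda>n. y n \<le> xs - \<delta> \<longrightarrow> y n + c/2 \<le> W (Suc n) - W n) sequentially"
  proof (rule eventually_mono)
    fix n
    have "y n \<le> xs - \<delta> \<longrightarrow> y n + c \<le> h (y n)" using c range by blast
    then show "W (Suc n) - W n - h (y n) > - (c/2) \<Longrightarrow> y n \<le> xs - \<delta> \<longrightarrow> y n + c/2 \<le> W (Suc n) - W n"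
      by auto
  qed
  then show "\<exists>c>0. eventually (\<lambda>n. y n \<le> xs - \<delta> \<longrightarrow> y n + c \<le> W (Suc n) - W n) sequentially"
    using \<open>c > 0\<close> by (intro exI[of _ "c/2"]) auto
qed

end

lemma inward_map_H_fun_g_fun:
  assumes p: "0 < p" "p < 1" and f: "\<forall>x\<in>{0..1}. f x \<in> {0..1}" and k: "k \<ge> 1"
  shows "inward_map (H_fun k (g_fun p f))"
proof
  show "H_fun k (g_fun p f) 1 < 1"
    using H_fun_one[OF k] g_fun_bounds[OF p, of f 1] f by simp
  show "-1 < H_fun k (g_fun p f) (-1)"
    using H_fun_minus_one g_fun_bounds[OF p, of f 0] f by simp
qed (rule continuous_on_H_fun)

section \<open>Sampling without replacement\<close>

lemma sum_if_mem_eq_card: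
  fixes a b :: real
  assumes "finite B"
  shows "(\<Sum>y\<in>B. if y \<in> P then a else b) = real (card (B \<inter> P)) * a + real (card (B - P)) * b"
proof -
  have "(\<Sum>y\<in>B. if y \<in> P then a else b) = (\<Sum>y\<in>B \<inter> {y. y \<in> P}. a) + (\<Sum>y\<in>B \<inter> - {y. y \<in> P}. b)"
    using assms by (rule sum.If_cases)
  also have "B \<inter> {y. y \<in> P} = B \<inter> P" by auto
  also have "B \<inter> - {y. y \<in> P} = B - P" by auto
  finally show ?thesis by simp
qed

lemma sum_binomial_weights_Suc:
  fixes \<Phi> :: "nat \<Rightarrow> real" and m r :: real
  shows "(\<Sum>j\<le>K. (m * \<Phi> (Suc j) + r * \<Phi> j) * real (K choose j) * m ^ j * r ^ (K - j))
       = (\<Sum>j\<le>Suc K. \<Phi> j * real (Suc K choose j) * m ^ j * r ^ (Suc K - j))"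
proof -
  define f where "f j = \<Phi> j * real (K choose j) * m ^ j * r ^ (Suc K - j)" for j
  have A: "(\<Sum>j\<le>K. f j) = f 0 + (\<Sum>j\<le>K. f (Suc j))"
  proof -
    have "(\<Sum>j\<le>Suc K. f j) = f 0 + (\<Sum>j\<le>K. f (Suc j))" by (rule sum.atMost_Suc_shift)
    moreover have "(\<Sum>j\<le>Suc K. f j) = (\<Sum>j\<le>K. f j) + f (Suc K)" by simp
    moreover have "f (Suc K) = 0" by (simp add: f_def)
    ultimately show ?thesis by simp
  qed
  have "(\<Sum>j\<le>Suc K. \<Phi> j * real (Suc K choose j) * m ^ j * r ^ (Suc K - j))
      = \<Phi> 0 * r ^ Suc K + (\<Sum>j\<le>K. \<Phi> (Suc j) * real (Suc K choose Suc j) * m ^ Suc j * r ^ (K - j))"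
    by (subst sum.atMost_Suc_shift) simp
  also have "(\<Sum>j\<le>K. \<Phi> (Suc j) * real (Suc K choose Suc j) * m ^ Suc j * r ^ (K - j))
      = (\<Sum>j\<le>K. \<Phi> (Suc j) * real (K choose j) * m ^ Suc j * r ^ (K - j))
        + (\<Sum>j\<le>K. f (Suc j))"
    by (simp add: f_def sum.distrib[symmetric] algebra_simps)
  also have "\<Phi> 0 * r ^ Suc K + ((\<Sum>j\<le>K. \<Phi> (Suc j) * real (K choose j) * m ^ Suc j * r ^ (K - j))
        + (\<Sum>j\<le>K. f (Suc j)))
      = (\<Sum>j\<le>K. \<Phi> (Suc j) * real (K choose j) * m ^ Suc j * r ^ (K - j)) + (\<Sum>j\<le>K. f j)"
    using A by (simp add: f_def)
  also have "\<dots> = (\<Sum>j\<le>K. (m * \<Phi> (Suc j) + r * \<Phi> j) * real (K choose j) * m ^ j * r ^ (K - j))"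
    unfolding sum.distrib[symmetric]
  proof (intro sum.cong refl)
    fix j assume "j \<in> {..K}"
    then have "Suc K - j = Suc (K - j)" by auto
    then show "\<Phi> (Suc j) * real (K choose j) * m ^ Suc j * r ^ (K - j) + f j
        = (m * \<Phi> (Suc j) + r * \<Phi> j) * real (K choose j) * m ^ j * r ^ (K - j)"
      by (simp add: f_def algebra_simps)
  qed
  finally show ?thesis by simp
qed

lemma sum_PiE_card_preimage:
  fixes \<Phi> :: "nat \<Rightarrow> real"
  assumes I: "finite I" and B: "finite B"
  shows "(\<Sum>t\<in>PiE I (\<lambda>_. B). \<Phi> (card {i\<in>I. t i \<in> P}))
       = (\<Sum>j\<le>card I. \<Phi> j * real (card I choose j)
            * real (card (B \<inter> P)) ^ j * real (card (B - P)) ^ (card I - j))"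
  using I
proof (induction I arbitrary: \<Phi> rule: finite_induct)
  case empty
  then show ?case by simp
next
  case (insert x A)
  define m where "m = real (card (B \<inter> P))"
  define r where "r = real (card (B - P))"
  define c where "c g = card {i\<in>A. g i \<in> P}" for g :: "'a \<Rightarrow> 'b"
  have cardeq: "card {i\<in>insert x A. (g(x := y)) i \<in> P} = c g + (if y \<in> P then 1 else 0)" for g y
  proof -
    have "{i\<in>insert x A. (g(x := y)) i \<in> P}
        = (if y \<in> P then insert x {i\<in>A. g i \<in> P} else {i\<in>A. g i \<in> P})"
      using insert.hyps by auto
    then show ?thesis using insert.hyps by (simp add: c_def)
  qed
  have "(\<Sum>t\<in>PiE (insert x A) (\<lambda>_. B). \<Phi> (card {i\<in>insert x A. t i \<in> P}))
      = (\<Sum>(y,g)\<in>B \<times> PiE A (\<lambda>_. B). \<Phi> (card {i\<in>insert x A. (g(x := y)) i \<in> P}))"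
    using insert.hyps
    by (intro sum.reindex_bij_witness[of _ "\<lambda>(y,g). g(x := y)" "\<lambda>g. (g x, g(x := undefined))"])
       (auto simp: PiE_def extensional_def intro!: arg_cong[of _ _ "\<lambda>S. \<Phi> (card S)"])
  also have "\<dots> = (\<Sum>(y,g)\<in>B \<times> PiE A (\<lambda>_. B). \<Phi> (c g + (if y \<in> P then 1 else 0)))"
    by (intro sum.cong refl) (auto simp only: split_beta cardeq)
  also have "\<dots> = (\<Sum>y\<in>B. \<Sum>g\<in>PiE A (\<lambda>_. B). \<Phi> (c g + (if y \<in> P then 1 else 0)))"
    by (subst sum.cartesian_product) auto
  also have "\<dots> = (\<Sum>g\<in>PiE A (\<lambda>_. B). \<Sum>y\<in>B. \<Phi> (c g + (if y \<in> P then 1 else 0)))"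
    by (rule sum.swap)
  also have "\<dots> = (\<Sum>g\<in>PiE A (\<lambda>_. B). m * \<Phi> (Suc (c g)) + r * \<Phi> (c g))"
  proof (intro sum.cong refl)
    fix g
    have "(\<Sum>y\<in>B. \<Phi> (c g + (if y \<in> P then 1 else 0)))
        = (\<Sum>y\<in>B. if y \<in> P then \<Phi> (Suc (c g)) else \<Phi> (c g))"
      by (intro sum.cong) auto
    also have "\<dots> = m * \<Phi> (Suc (c g)) + r * \<Phi> (c g)"
      using sum_if_mem_eq_card[OF B] by (simp add: m_def r_def)
    finally show "(\<Sum>y\<in>B. \<Phi> (c g + (if y \<in> P then 1 else 0))) = m * \<Phi> (Suc (c g)) + r * \<Phi> (c g)" .
  qed
  also have "\<dots> = (\<Sum>j\<le>card A.
      (m * \<Phi> (Suc j) + r * \<Phi> j) * real (card A choose j) * m ^ j * r ^ (card A - j))"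
    using insert.IH[of "\<lambda>j. m * \<Phi> (Suc j) + r * \<Phi> j"] by (simp add: c_def m_def r_def)
  also have "\<dots> = (\<Sum>j\<le>Suc (card A).
      \<Phi> j * real (Suc (card A) choose j) * m ^ j * r ^ (Suc (card A) - j))"
    by (rule sum_binomial_weights_Suc)
  finally show ?case using insert.hyps by (simp add: m_def r_def)
qed

lemma abs_average_diff_subset_le:
  fixes \<phi> :: "'a \<Rightarrow> real"
  assumes U: "finite U" and TU: "T \<subseteq> U" and T: "T \<noteq> {}" and phi: "\<And>u. u \<in> U \<Longrightarrow> 0 \<le> \<phi> u \<and> \<phi> u \<le> 1"
  shows "\<bar>sum \<phi> T / card T - sum \<phi> U / card U\<bar> \<le> 1 - card T / card U"
proof -
  have fT: "finite T" using U TU finite_subset by blast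
  have cT: "card T > 0" using fT T by (simp add: card_gt_0_iff)
  have cTU: "card T \<le> card U" using U TU by (rule card_mono)
  have cU: "card U > 0" using cT cTU by simp
  define s where "s = sum \<phi> T"
  define e where "e = sum \<phi> (U - T)"
  have sU: "sum \<phi> U = s + e" unfolding s_def e_def using U TU
    by (metis add.commute sum.subset_diff)
  have s0: "0 \<le> s" unfolding s_def using phi TU by (intro sum_nonneg) auto
  have s1: "s \<le> card T" unfolding s_def using phi TU
    using sum_bounded_above[of T \<phi> 1] by auto
  have e0: "0 \<le> e" unfolding e_def using phi by (intro sum_nonneg) auto
  have e1: "e \<le> real (card U) - card T" unfolding e_def
    using sum_bounded_above[of "U - T" \<phi> 1] phi card_Diff_subset[OF fT TU] cTU
    by (auto simp: of_nat_diff)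
  define a where "a = real (card T)"
  define b where "b = real (card U)"
  have ab: "0 < a" "a \<le> b" using cT cTU by (auto simp: a_def b_def)
  have "s / a - (s + e) / b = (s / a) * ((b - a) / b) - e / b"
    using ab by (simp add: field_simps)
  moreover have q: "0 \<le> s / a" "s / a \<le> 1" using ab s0 s1 by (auto simp: a_def)
  moreover have w: "0 \<le> (b - a) / b" using ab by simp
  moreover have "0 \<le> (s / a) * ((b - a) / b)" using mult_nonneg_nonneg[OF q(1) w] .
  moreover have "(s / a) * ((b - a) / b) \<le> (b - a) / b"
    using mult_left_le_one_le[OF w q] .
  moreover have "0 \<le> e / b" "e / b \<le> (b - a) / b"
    using e0 e1 ab by (auto simp: a_def b_def divide_right_mono)
  ultimately have "\<bar>s / a - (s + e) / b\<bar> \<le> (b - a) / b" by linarith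
  also have "(b - a) / b = 1 - a / b" using ab by (simp add: field_simps)
  finally show ?thesis by (simp add: sU s_def a_def b_def)
qed

lemma real_card_tuples: "n \<ge> k \<Longrightarrow> real (card (tuples k n)) = (\<Prod>l<k. real n - real l)"
proof -
  have "card (tuples k n)
      = card {1..n} ^ (card {0..<k} - card {0..<k}) * prod ((-) (card {1..n})) {0 ..< card {0..<k}}"
    unfolding tuples_def by (rule card_inj_on_subset_funcset) auto
  then have "card (tuples k n) = (\<Prod>l\<in>{0..<k}. n - l)" by simp
  moreover assume "n \<ge> k"
  ultimately show ?thesis by (simp add: of_nat_prod of_nat_diff lessThan_atLeast0)
qed

lemma prod_one_minus_div_tendsto_1: "(\<lambda>n. \<Prod>l<k. 1 - real l / real n) \<longlonglongrightarrow> 1"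
proof -
  have "(\<lambda>n. \<Prod>l<k. 1 - real l / real n) \<longlonglongrightarrow> (\<Prod>l<k. 1 - 0 :: real)"
    by (intro tendsto_prod tendsto_diff tendsto_const lim_const_over_n)
  then show ?thesis by simp
qed

text \<open>The right-hand side is \<open>2 P - 1\<close>, where \<open>P\<close> is the success probability for a sample
  drawn with replacement.\<close>
lemma H_fun_eq_average_over_functions:
  fixes x :: "nat \<Rightarrow> real"
  assumes "n > 0" and x: "\<And>i. i \<in> {1..n} \<Longrightarrow> x i \<in> {-1, 1}"
  shows "H_fun k G ((\<Sum>i=1..n. x i) / real n) =
    2 * (\<Sum>t\<in>{0..<k} \<rightarrow>\<^sub>E {1..n}. G (real (card {i \<in> {0..<k}. x (t i) = 1}) / real k))
      / real n ^ k - 1"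
proof -
  define P where "P = {j. x j = 1}"
  define m where "m = real (card ({1..n} \<inter> P))"
  define r where "r = real (card ({1..n} - P))"
  have sum_x: "(\<Sum>i=1..n. x i) = m - r"
  proof -
    have "(\<Sum>i=1..n. x i) = (\<Sum>i\<in>{1..n}. if i \<in> P then 1 else -1)"
      using x by (intro sum.cong) (auto simp: P_def)
    then show ?thesis using sum_if_mem_eq_card[of "{1..n}" P 1 "-1"] by (simp add: m_def r_def)
  qed
  have "m + r = real n"
    using sum_if_mem_eq_card[of "{1..n}" P 1 1] by (simp add: m_def r_def)
  then have y1: "1 + (m - r) / real n = 2 * m / real n"
    and y2: "1 - (m - r) / real n = 2 * r / real n"
    using \<open>n > 0\<close> by (auto simp: field_simps)
  have power_term:
    "(2 * m / real n) ^ i * (2 * r / real n) ^ (k - i) = 2 ^ k * (m ^ i * r ^ (k - i)) / real n ^ k"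
    if "i \<le> k" for i
  proof -
    have "(2 * m / real n) ^ i * (2 * r / real n) ^ (k - i)
        = (2 ^ i * 2 ^ (k - i)) * (m ^ i * r ^ (k - i)) / (real n ^ i * real n ^ (k - i))"
      by (simp add: power_divide power_mult_distrib)
    also have "2 ^ i * 2 ^ (k - i) = (2::real) ^ k" using that by (simp add: power_add[symmetric])
    also have "real n ^ i * real n ^ (k - i) = real n ^ k"
      using that by (simp add: power_add[symmetric])
    finally show ?thesis .
  qed
  have "(\<Sum>t\<in>{0..<k} \<rightarrow>\<^sub>E {1..n}. G (real (card {i \<in> {0..<k}. x (t i) = 1}) / real k))
      = (\<Sum>j\<le>k. G (real j / real k) * real (k choose j) * m ^ j * r ^ (k - j))"
    using sum_PiE_card_preimage[of "{0..<k}" "{1..n}" "\<lambda>j. G (real j / real k)" P]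
      by (simp add: P_def m_def r_def)
  moreover have "(\<Sum>i = 0..k. G (real i / real k) * real (k choose i) * (1 + (m - r) / real n) ^ i
        * (1 - (m - r) / real n) ^ (k - i))
      = 2 ^ k / real n ^ k * (\<Sum>j\<le>k. G (real j / real k) * real (k choose j) * m ^ j * r ^ (k - j))"
    unfolding y1 y2 atLeast0AtMost sum_distrib_left
    by (intro sum.cong refl) (simp add: power_term mult.assoc)
  ultimately show ?thesis
    unfolding H_fun_def sum_x by (simp add: two_powr_1_minus mult.assoc[symmetric])
qed

lemma samp_prob_approx_H_fun:
  fixes G :: "real \<Rightarrow> real" and x :: "nat \<Rightarrow> real"
  assumes n: "0 < n" "k \<le> n"
    and G: "\<And>j. j \<le> k \<Longrightarrow> G (real j / real k) \<in> {0..1}"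
    and x: "\<And>i. i \<in> {1..n} \<Longrightarrow> x i \<in> {-1, 1}"
  shows "\<bar>2 * samp_prob k n G x - 1 - H_fun k G ((\<Sum>i=1..n. x i) / real n)\<bar>
          \<le> 2 * (1 - (\<Prod>l<k. 1 - real l / real n))"
proof -
  define U where "U = {0..<k} \<rightarrow>\<^sub>E {1..n}"
  define T where "T = tuples k n"
  define \<phi> where "\<phi> t = G (real (card {i \<in> {0..<k}. x (t i) = 1}) / real k)" for t
  have "finite U" unfolding U_def by (intro finite_PiE) auto
  have "T \<subseteq> U" unfolding T_def U_def tuples_def by auto
  have card_T: "real (card T) = (\<Prod>l<k. real n - real l)"
    unfolding T_def using n by (intro real_card_tuples)
  then have "T \<noteq> {}" using n by (auto intro!: prod_pos)
  have card_U: "card U = n ^ k" unfolding U_def by (simp add: card_PiE)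
  have \<phi>: "0 \<le> \<phi> t \<and> \<phi> t \<le> 1" for t
  proof -
    have "card {i \<in> {0..<k}. x (t i) = 1} \<le> card {0..<k}" by (intro card_mono) auto
    then show ?thesis unfolding \<phi>_def using G by auto
  qed
  have "samp_prob k n G x = sum \<phi> T / card T"
    unfolding samp_prob_def T_def \<phi>_def by simp
  moreover have "H_fun k G ((\<Sum>i=1..n. x i) / real n) = 2 * (sum \<phi> U / card U) - 1"
    unfolding card_U using H_fun_eq_average_over_functions[OF n(1) x] by (simp add: U_def \<phi>_def)
  ultimately have "2 * samp_prob k n G x - 1 - H_fun k G ((\<Sum>i=1..n. x i) / real n)
      = 2 * (sum \<phi> T / card T - sum \<phi> U / card U)"
    by (simp add: algebra_simps)
  moreover have "\<bar>sum \<phi> T / card T - sum \<phi> U / card U\<bar> \<le> 1 - card T / card U"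
    using abs_average_diff_subset_le[OF \<open>finite U\<close> \<open>T \<subseteq> U\<close> \<open>T \<noteq> {}\<close>] \<phi> by (simp add: U_def)
  moreover have "card T / card U = (\<Prod>l<k. 1 - real l / real n)"
  proof -
    have "real (card T) / real (card U) = (\<Prod>l<k. real n - real l) / (\<Prod>l<k. real n)"
      unfolding card_T card_U by simp
    also have "\<dots> = (\<Prod>l<k. (real n - real l) / real n)" by (rule prod_dividef[symmetric])
    also have "\<dots> = (\<Prod>l<k. 1 - real l / real n)"
      using n by (intro prod.cong) (auto simp: field_simps)
    finally show ?thesis .
  qed
  ultimately show ?thesis by (simp add: abs_mult)
qed

section \<open>A strong law for bounded martingale differences\<close>

lemma power4_add_le:
  fixes m d B :: real
  assumes d: "\<bar>d\<bar> \<le> B"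
  shows "(m + d) ^ 4 \<le> m ^ 4 + 4 * (m ^ 3 * d) + 8 * B\<^sup>2 * m\<^sup>2 + 3 * B ^ 4"
proof -
  have B: "0 \<le> B" using d by linarith
  have d2: "d\<^sup>2 \<le> B\<^sup>2" using power_mono[OF d, of 2] by simp
  have expand: "(m + d) ^ 4 = m ^ 4 + 4 * (m ^ 3 * d) + 6 * (m\<^sup>2 * d\<^sup>2) + 4 * (m * d ^ 3) + (d\<^sup>2)\<^sup>2"
    by (simp add: power2_eq_square power3_eq_cube eval_nat_numeral algebra_simps)
  have "m\<^sup>2 * d\<^sup>2 \<le> B\<^sup>2 * m\<^sup>2"
    using mult_right_mono[OF d2 zero_le_power2[of m]] by (simp add: mult.commute)
  moreover have "m * d ^ 3 \<le> (B\<^sup>2 * m\<^sup>2 + B ^ 4) / 2"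
  proof -
    have "m * d ^ 3 \<le> \<bar>m * d ^ 3\<bar>" by (rule abs_ge_self)
    also have "\<dots> = \<bar>m\<bar> * \<bar>d\<bar> ^ 3" by (simp add: abs_mult power_abs)
    also have "\<dots> \<le> \<bar>m\<bar> * B ^ 3" using d by (intro mult_left_mono power_mono) auto
    also have "\<dots> \<le> (B\<^sup>2 * m\<^sup>2 + B ^ 4) / 2"
      using mult_nonneg_nonneg[OF zero_le_power2[of B] zero_le_power2[of "\<bar>m\<bar> - B"]]
      by (simp add: power2_eq_square eval_nat_numeral algebra_simps)
    finally show ?thesis .
  qed
  moreover have "(d\<^sup>2)\<^sup>2 \<le> (B\<^sup>2)\<^sup>2" by (rule power_mono[OF d2]) simp
  ultimately show ?thesis unfolding expand by (simp add: eval_nat_numeral)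
qed

lemma (in prob_space) AE_tendsto_0_of_summable_integrals:
  fixes u :: "nat \<Rightarrow> 'a \<Rightarrow> real"
  assumes measurable: "\<And>n. u n \<in> borel_measurable M" and nonneg: "\<And>n x. 0 \<le> u n x"
    and integrable: "\<And>n. integrable M (u n)" and summable: "summable (\<lambda>n. integral\<^sup>L M (u n))"
  shows "AE x in M. (\<lambda>n. u n x) \<longlonglongrightarrow> 0"
proof -
  have "(\<integral>\<^sup>+ x. (\<Sum>n. ennreal (u n x)) \<partial>M) = (\<Sum>n. \<integral>\<^sup>+ x. ennreal (u n x) \<partial>M)"
    using measurable by (intro nn_integral_suminf) simp
  also have "\<dots> = (\<Sum>n. ennreal (integral\<^sup>L M (u n)))"
    using integrable nonneg by (simp add: nn_integral_eq_integral)
  also have "\<dots> \<noteq> \<infinity>"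
    using summable nonneg by (simp add: ennreal_suminf_neq_top integral_nonneg_AE)
  finally have "AE x in M. (\<Sum>n. ennreal (u n x)) \<noteq> \<infinity>"
    using measurable by (intro nn_integral_PInf_AE) simp_all
  then show ?thesis
  proof (rule eventually_mono)
    fix x assume "(\<Sum>n. ennreal (u n x)) \<noteq> \<infinity>"
    then have "summable (\<lambda>n. u n x)" using nonneg by (intro summable_suminf_not_top) simp_all
    then show "(\<lambda>n. u n x) \<longlonglongrightarrow> 0" by (rule summable_LIMSEQ_zero)
  qed
qed

locale bounded_martingale_differences = prob_space M
  for M :: "'w measure" +
  fixes F :: "nat \<Rightarrow> 'w measure" and D :: "nat \<Rightarrow> 'w \<Rightarrow> real" and B :: real
  assumes subalgebra_F: "\<And>n. subalgebra M (F n)"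
    and sets_F_mono: "\<And>n m. n \<le> m \<Longrightarrow> sets (F n) \<subseteq> sets (F m)"
    and measurable_D: "\<And>j. D j \<in> borel_measurable (F (Suc j))"
    and bounded_D: "\<And>j \<omega>. \<omega> \<in> space M \<Longrightarrow> \<bar>D j \<omega>\<bar> \<le> B"
    and orthogonal_D: "\<And>j V C. V \<in> borel_measurable (F j) \<Longrightarrow> (\<And>\<omega>. \<omega> \<in> space M \<Longrightarrow> \<bar>V \<omega>\<bar> \<le> C)
      \<Longrightarrow> (\<integral>\<omega>. V \<omega> * D j \<omega> \<partial>M) = 0"
begin

definition partial_sum :: "nat \<Rightarrow> 'w \<Rightarrow> real" where
  "partial_sum n \<omega> = (\<Sum>j<n. D j \<omega>)"

lemma partial_sum_Suc: "partial_sum (Suc n) \<omega> = partial_sum n \<omega> + D n \<omega>"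
  by (simp add: partial_sum_def)

lemma bound_nonneg: "0 \<le> B"
proof -
  obtain \<omega> where "\<omega> \<in> space M" using not_empty by blast
  then show ?thesis using bounded_D[of \<omega> 0] by linarith
qed

lemma subalgebra_F_mono: "m \<le> n \<Longrightarrow> subalgebra (F n) (F m)"
  using subalgebra_F sets_F_mono unfolding subalgebra_def by auto

lemma measurable_partial_sum_F: "partial_sum n \<in> borel_measurable (F n)"
proof -
  have "D j \<in> borel_measurable (F n)" if "j < n" for j
    using measurable_from_subalg[OF subalgebra_F_mono measurable_D] that by simp
  then show ?thesis unfolding partial_sum_def by (intro borel_measurable_sum) auto
qed

lemma measurable_partial_sum [measurable]: "partial_sum n \<in> borel_measurable M"
  using measurable_from_subalg[OF subalgebra_F measurable_partial_sum_F] .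

lemma borel_measurable_D [measurable]: "D j \<in> borel_measurable M"
  using measurable_from_subalg[OF subalgebra_F measurable_D] .

lemma abs_partial_sum_le: "\<omega> \<in> space M \<Longrightarrow> \<bar>partial_sum n \<omega>\<bar> \<le> B * real n"
proof -
  assume "\<omega> \<in> space M"
  then have "\<bar>partial_sum n \<omega>\<bar> \<le> (\<Sum>j<n. B)"
    unfolding partial_sum_def using bounded_D by (intro order.trans[OF sum_abs] sum_mono) auto
  then show ?thesis by (simp add: mult.commute)
qed

lemma abs_partial_sum_power_le: "\<omega> \<in> space M \<Longrightarrow> \<bar>partial_sum n \<omega> ^ i\<bar> \<le> (B * real n) ^ i"
  unfolding power_abs by (intro power_mono abs_partial_sum_le) auto

lemma integrable_partial_sum_power: "integrable M (\<lambda>\<omega>. partial_sum n \<omega> ^ i)"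
  using abs_partial_sum_power_le by (intro integrable_const_bound[of _ "(B * real n) ^ i"]) auto

lemma integrable_partial_sum_power_mult_D: "integrable M (\<lambda>\<omega>. partial_sum n \<omega> ^ i * D n \<omega>)"
proof (intro integrable_const_bound[of _ "(B * real n) ^ i * B"] AE_I2 impI)
  fix \<omega> assume "\<omega> \<in> space M"
  then show "norm (partial_sum n \<omega> ^ i * D n \<omega>) \<le> (B * real n) ^ i * B"
    unfolding real_norm_def abs_mult
    by (intro mult_mono abs_partial_sum_power_le bounded_D) (use bound_nonneg in auto)
qed simp

lemma integral_partial_sum_power_mult_D: "(\<integral>\<omega>. partial_sum n \<omega> ^ i * D n \<omega> \<partial>M) = 0"
  by (rule orthogonal_D[OF borel_measurable_power[OF measurable_partial_sum_F]
        abs_partial_sum_power_le])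

lemma second_moment_le: "(\<integral>\<omega>. partial_sum n \<omega> ^ 2 \<partial>M) \<le> B\<^sup>2 * real n"
proof (induction n)
  case (Suc n)
  have "(\<integral>\<omega>. partial_sum (Suc n) \<omega> ^ 2 \<partial>M)
      \<le> (\<integral>\<omega>. partial_sum n \<omega> ^ 2 + 2 * (partial_sum n \<omega> * D n \<omega>) + B\<^sup>2 \<partial>M)"
  proof (intro integral_mono Bochner_Integration.integrable_add integrable_mult_right
      integrable_partial_sum_power integrable_partial_sum_power_mult_D[of n 1, simplified]
      integrable_const)
    fix \<omega> assume "\<omega> \<in> space M"
    then have "(D n \<omega>)\<^sup>2 \<le> B\<^sup>2" using power_mono[OF bounded_D, of \<omega> n 2] by simp
    then show "partial_sum (Suc n) \<omega> ^ 2
        \<le> partial_sum n \<omega> ^ 2 + 2 * (partial_sum n \<omega> * D n \<omega>) + B\<^sup>2"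
      unfolding partial_sum_Suc by (simp add: power2_eq_square algebra_simps)
  qed
  also have "\<dots> = (\<integral>\<omega>. partial_sum n \<omega> ^ 2 \<partial>M) + B\<^sup>2"
    using integrable_partial_sum_power integrable_partial_sum_power_mult_D[of n 1]
      integral_partial_sum_power_mult_D[of n 1]
    by (simp add: prob_space)
  finally show ?case using Suc.IH by (simp add: algebra_simps)
qed (simp add: partial_sum_def)

lemma fourth_moment_le: "(\<integral>\<omega>. partial_sum n \<omega> ^ 4 \<partial>M) \<le> 7 * B ^ 4 * (real n)\<^sup>2"
proof (induction n)
  case (Suc n)
  have "(\<integral>\<omega>. partial_sum (Suc n) \<omega> ^ 4 \<partial>M)
      \<le> (\<integral>\<omega>. partial_sum n \<omega> ^ 4 + 4 * (partial_sum n \<omega> ^ 3 * D n \<omega>)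
            + 8 * B\<^sup>2 * partial_sum n \<omega> ^ 2 + 3 * B ^ 4 \<partial>M)"
  proof (intro integral_mono Bochner_Integration.integrable_add integrable_mult_right
      integrable_partial_sum_power integrable_partial_sum_power_mult_D integrable_const)
    fix \<omega> assume "\<omega> \<in> space M"
    then show "partial_sum (Suc n) \<omega> ^ 4 \<le> partial_sum n \<omega> ^ 4 + 4 * (partial_sum n \<omega> ^ 3 * D n \<omega>)
        + 8 * B\<^sup>2 * partial_sum n \<omega> ^ 2 + 3 * B ^ 4"
      unfolding partial_sum_Suc by (rule power4_add_le[OF bounded_D])
  qed
  also have "\<dots> = (\<integral>\<omega>. partial_sum n \<omega> ^ 4 \<partial>M) + 8 * B\<^sup>2 * (\<integral>\<omega>. partial_sum n \<omega> ^ 2 \<partial>M) + 3 * B ^ 4"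
    using integrable_partial_sum_power integrable_partial_sum_power_mult_D
    by (simp add: integral_partial_sum_power_mult_D prob_space)
  also have "\<dots> \<le> 7 * B ^ 4 * (real n)\<^sup>2 + 8 * B\<^sup>2 * (B\<^sup>2 * real n) + 3 * B ^ 4"
    using Suc.IH second_moment_le[of n] by (intro add_mono mult_left_mono) auto
  also have "\<dots> = 7 * B ^ 4 * (real (Suc n))\<^sup>2 - B ^ 4 * (6 * real n + 4)"
    by (simp add: power2_eq_square eval_nat_numeral algebra_simps)
  also have "\<dots> \<le> 7 * B ^ 4 * (real (Suc n))\<^sup>2"
    by (simp add: zero_le_mult_iff)
  finally show ?case .
qed (simp add: partial_sum_def)

lemma AE_partial_sum_average_tendsto_0: "AE \<omega> in M. (\<lambda>n. partial_sum n \<omega> / real n) \<longlonglongrightarrow> 0"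
proof -
  define u where "u n \<omega> = (partial_sum n \<omega> / real n) ^ 4" for n \<omega>
  have integral_u: "integral\<^sup>L M (u n) \<le> 7 * B ^ 4 * inverse ((real n)\<^sup>2)" for n
  proof (cases "n = 0")
    case False
    have "integral\<^sup>L M (u n) = (\<integral>\<omega>. partial_sum n \<omega> ^ 4 \<partial>M) / real n ^ 4"
      unfolding u_def by (simp add: power_divide)
    also have "\<dots> \<le> 7 * B ^ 4 * (real n)\<^sup>2 / real n ^ 4"
      using fourth_moment_le by (intro divide_right_mono) auto
    also have "\<dots> = 7 * B ^ 4 * inverse ((real n)\<^sup>2)"
      using False by (simp add: field_simps eval_nat_numeral)
    finally show ?thesis .
  qed (simp add: u_def[abs_def])
  have "AE \<omega> in M. (\<lambda>n. u n \<omega>) \<longlonglongrightarrow> 0"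
  proof (rule AE_tendsto_0_of_summable_integrals)
    show "integrable M (u n)" for n
      unfolding u_def power_divide by (intro integrable_divide integrable_partial_sum_power)
    have "summable (\<lambda>n. 7 * B ^ 4 * inverse ((real n)\<^sup>2))"
      by (intro summable_mult inverse_power_summable) auto
    moreover have "norm (integral\<^sup>L M (u n)) \<le> 7 * B ^ 4 * inverse ((real n)\<^sup>2)" for n
      using integral_u[of n] by (simp add: u_def)
    ultimately show "summable (\<lambda>n. integral\<^sup>L M (u n))"
      by (rule summable_comparison_test'[where N = 0])
  qed (simp_all add: u_def)
  then show ?thesis
  proof (rule eventually_mono)
    fix \<omega> assume "(\<lambda>n. u n \<omega>) \<longlonglongrightarrow> 0"
    then have "(\<lambda>n. root 4 (u n \<omega>)) \<longlonglongrightarrow> 0"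
      using tendsto_real_root[of "\<lambda>n. u n \<omega>" 0 sequentially 4] by simp
    moreover have "root 4 (u n \<omega>) = \<bar>partial_sum n \<omega> / real n\<bar>" for n
    proof -
      have "u n \<omega> = \<bar>partial_sum n \<omega> / real n\<bar> ^ 4"
        unfolding u_def by (rule power_even_abs[symmetric]) simp
      then show ?thesis by (simp add: real_root_power_cancel)
    qed
    ultimately have "(\<lambda>n. \<bar>partial_sum n \<omega> / real n\<bar>) \<longlonglongrightarrow> 0" by (simp only:)
    then show "(\<lambda>n. partial_sum n \<omega> / real n) \<longlonglongrightarrow> 0" by (rule tendsto_rabs_zero_cancel)
  qed
qed

end

section \<open>The elephant random walk with sampling without replacement\<close>

lemma borel_measurable_samp_prob:
  fixes X :: "nat \<Rightarrow> 'w \<Rightarrow> real" and N :: "'w measure"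
  assumes XN: "\<And>i. i \<le> n \<Longrightarrow> X i \<in> borel_measurable N"
  shows "(\<lambda>\<omega>. samp_prob k n G (\<lambda>i. X i \<omega>)) \<in> borel_measurable N"
proof -
  have term_meas: "(\<lambda>\<omega>. G (real (card {i \<in> {0..<k}. X (t i) \<omega> = 1}) / real k)) \<in> borel_measurable N"
    if t: "t \<in> tuples k n" for t
  proof -
    have tin: "t i \<le> n" if "i < k" for i
      using t that unfolding tuples_def by (auto simp: PiE_def Pi_def)
    have sets: "{\<omega> \<in> space N. i \<in> {i \<in> {0..<k}. X (t i) \<omega> = 1}} \<in> sets N" for i
    proof (cases "i < k")
      case True
      have [measurable]: "X (t i) \<in> borel_measurable N" using XN tin True by auto
      have "{\<omega> \<in> space N. i \<in> {i \<in> {0..<k}. X (t i) \<omega> = 1}} = {\<omega> \<in> space N. X (t i) \<omega> = 1}"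
        using True by auto
      also have "\<dots> \<in> sets N" by measurable
      finally show ?thesis .
    next
      case False
      then show ?thesis by simp
    qed
    have c: "(\<lambda>\<omega>. card {i \<in> {0..<k}. X (t i) \<omega> = 1}) \<in> measurable N (count_space UNIV)"
      by (rule measurable_card) (rule sets)
    show ?thesis
      by (rule measurable_compose_countable[where f="\<lambda>j \<omega>. G (real j / real k)", OF _ c]) simp
  qed
  show ?thesis unfolding samp_prob_def
    by (intro borel_measurable_divide borel_measurable_sum borel_measurable_const term_meas)
qed

lemma samp_prob_in_unit:
  assumes G: "\<And>j. j \<le> k \<Longrightarrow> G (real j / real k) \<in> {0..1}"
  shows "samp_prob k n G x \<in> {0..1}"
proof -
  have G_sample: "G (real (card {i \<in> {0..<k}. x (t i) = 1}) / real k) \<in> {0..1}" for t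
  proof -
    have "card {i \<in> {0..<k}. x (t i) = 1} \<le> card {0..<k}" by (intro card_mono) auto
    then show ?thesis using G by simp
  qed
  have "(\<Sum>t\<in>tuples k n. G (real (card {i \<in> {0..<k}. x (t i) = 1}) / real k))
      \<in> {0..real (card (tuples k n))}"
    using G_sample by (auto intro!: sum_nonneg sum_bounded_above[where K = 1, simplified])
  then show ?thesis
    unfolding samp_prob_def by (cases "card (tuples k n) = 0") (auto simp: divide_le_eq)
qed

lemma (in prob_space) integral_mult_indicator_eq_integral_mult_cond_prob:
  assumes sub: "subalgebra M N" and B: "B \<in> sets M"
    and Z: "Z \<in> borel_measurable N" "\<And>\<omega>. \<omega> \<in> space M \<Longrightarrow> Z \<omega> \<in> {0..1}"
    and cond_prob: "\<And>A. A \<in> sets N \<Longrightarrow> measure M (A \<inter> B) = (\<integral>\<omega>. indicator A \<omega> * Z \<omega> \<partial>M)"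
    and V: "V \<in> borel_measurable N" "\<And>\<omega>. \<omega> \<in> space M \<Longrightarrow> \<bar>V \<omega>\<bar> \<le> C"
  shows "(\<integral>\<omega>. V \<omega> * indicator B \<omega> \<partial>M) = (\<integral>\<omega>. V \<omega> * Z \<omega> \<partial>M)"
proof -
  interpret finite_measure_subalgebra M N by unfold_locales (rule sub)
  have [measurable]: "Z \<in> borel_measurable M" "V \<in> borel_measurable M" "B \<in> sets M"
    using measurable_from_subalg[OF sub] Z V B by auto
  have integrable_Z: "integrable M Z"
    using Z by (intro integrable_const_bound[of _ 1]) auto
  have integrable_B: "integrable M (indicator B :: 'a \<Rightarrow> real)"
    by (intro integrable_const_bound[of _ 1]) (auto simp: indicator_def)
  have cond_exp: "AE \<omega> in M. real_cond_exp M N (indicator B) \<omega> = Z \<omega>"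
  proof (rule real_cond_exp_charact[OF _ integrable_B integrable_Z Z(1)])
    fix A assume A: "A \<in> sets N"
    then have "A \<in> sets M" using sub by (auto simp: subalgebra_def)
    then have "(\<integral>\<omega>\<in>A. indicator B \<omega> \<partial>M) = measure M (A \<inter> B)"
      by (simp add: set_lebesgue_integral_def indicator_inter_arith[symmetric] mult.commute)
    also have "\<dots> = (\<integral>\<omega>\<in>A. Z \<omega> \<partial>M)"
      using cond_prob[OF A] by (simp add: set_lebesgue_integral_def)
    finally show "(\<integral>\<omega>\<in>A. indicator B \<omega> \<partial>M) = (\<integral>\<omega>\<in>A. Z \<omega> \<partial>M)" .
  qed
  have "integrable M V"
    using V by (intro integrable_const_bound[of _ C]) auto
  then have "integrable M (\<lambda>\<omega>. V \<omega> * indicator B \<omega>)"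
    using B by (rule integrable_real_mult_indicator[rotated])
  then have "(\<integral>\<omega>. V \<omega> * indicator B \<omega> \<partial>M) = (\<integral>\<omega>. V \<omega> * real_cond_exp M N (indicator B) \<omega> \<partial>M)"
    using real_cond_exp_intg(2)[of V "indicator B", OF _ V(1)] by simp
  also have "\<dots> = (\<integral>\<omega>. V \<omega> * Z \<omega> \<partial>M)"
    by (rule integral_cong_AE) (use cond_exp in auto)
  finally show ?thesis .
qed

lemma (in prob_space) integral_mult_sign_minus_cond_mean:
  fixes Y :: "'a \<Rightarrow> real"
  assumes sub: "subalgebra M N"
    and Y: "Y \<in> borel_measurable M" "\<And>\<omega>. \<omega> \<in> space M \<Longrightarrow> Y \<omega> \<in> {-1, 1}"
    and Z: "Z \<in> borel_measurable N" "\<And>\<omega>. \<omega> \<in> space M \<Longrightarrow> Z \<omega> \<in> {0..1}"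
    and cond_prob: "\<And>A. A \<in> sets N \<Longrightarrow>
      measure M (A \<inter> {\<omega>\<in>space M. Y \<omega> = 1}) = (\<integral>\<omega>. indicator A \<omega> * Z \<omega> \<partial>M)"
    and V: "V \<in> borel_measurable N" "\<And>\<omega>. \<omega> \<in> space M \<Longrightarrow> \<bar>V \<omega>\<bar> \<le> C"
  shows "(\<integral>\<omega>. V \<omega> * (Y \<omega> - (2 * Z \<omega> - 1)) \<partial>M) = 0"
proof -
  define B where "B = {\<omega>\<in>space M. Y \<omega> = 1}"
  have [measurable]: "Y \<in> borel_measurable M" "Z \<in> borel_measurable M" "V \<in> borel_measurable M"
    using measurable_from_subalg[OF sub] Y Z V by auto
  have "B \<in> sets M" unfolding B_def by measurable
  have "integrable M V"
    using V by (intro integrable_const_bound[of _ C]) auto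
  then have integrable: "integrable M (\<lambda>\<omega>. V \<omega> * indicator B \<omega>)" "integrable M (\<lambda>\<omega>. V \<omega> * Z \<omega>)"
    using \<open>B \<in> sets M\<close> Z(2)
    by (auto intro!: integrable_real_mult_indicator
        Bochner_Integration.integrable_bound[where f = V]
      simp: abs_mult mult_left_le)
  have "(\<integral>\<omega>. V \<omega> * (Y \<omega> - (2 * Z \<omega> - 1)) \<partial>M)
      = (\<integral>\<omega>. 2 * (V \<omega> * indicator B \<omega> - V \<omega> * Z \<omega>) \<partial>M)"
  proof (intro Bochner_Integration.integral_cong refl)
    fix \<omega> assume "\<omega> \<in> space M"
    then have "Y \<omega> = 2 * indicator B \<omega> - 1" using Y(2)[of \<omega>] by (auto simp: B_def indicator_def)
    then show "V \<omega> * (Y \<omega> - (2 * Z \<omega> - 1)) = 2 * (V \<omega> * indicator B \<omega> - V \<omega> * Z \<omega>)"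
      by (simp add: algebra_simps)
  qed
  also have "\<dots> = 2 * ((\<integral>\<omega>. V \<omega> * indicator B \<omega> \<partial>M) - (\<integral>\<omega>. V \<omega> * Z \<omega> \<partial>M))"
    using integrable by simp
  also have "\<dots> = 0"
    using integral_mult_indicator_eq_integral_mult_cond_prob[OF sub \<open>B \<in> sets M\<close> Z _ V] cond_prob
    by (simp add: B_def)
  finally show ?thesis .
qed

text \<open>The step minus its conditional mean given the past; the first \<open>k\<close> steps are the initial
  draws and are not counted.\<close>
definition sampling_noise :: "nat \<Rightarrow> (real \<Rightarrow> real) \<Rightarrow> (nat \<Rightarrow> real) \<Rightarrow> nat \<Rightarrow> real" where
  "sampling_noise k G x j = (if k \<le> j then x (Suc j) - (2 * samp_prob k j G x - 1) else 0)"

lemma abs_sum_signs_le: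
  assumes "\<And>i. i \<in> {1..n} \<Longrightarrow> x i \<in> {-1, 1}"
  shows "\<bar>\<Sum>i=1..n. x i\<bar> \<le> real n"
proof -
  have "\<bar>\<Sum>i=1..n. x i\<bar> \<le> (\<Sum>i=1..n. \<bar>x i\<bar>)" by (rule sum_abs)
  also have "\<dots> = (\<Sum>i=1..n. 1)"
  proof (rule sum.cong)
    show "\<bar>x i\<bar> = 1" if "i \<in> {1..n}" for i using assms[OF that] by auto
  qed simp
  finally show ?thesis by simp
qed

lemma average_tendsto_fixed_point_of_noise:
  fixes x :: "nat \<Rightarrow> real"
  assumes k: "k \<ge> 1" and G: "\<And>j. j \<le> k \<Longrightarrow> G (real j / real k) \<in> {0..1}"
    and x: "\<And>i. i \<ge> 1 \<Longrightarrow> x i \<in> {-1, 1}"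
    and H: "inward_map (H_fun k G)"
    and xs: "xs \<in> {-1..1}" and unique: "\<forall>y\<in>{-1..1}. H_fun k G y = y \<longrightarrow> y = xs"
    and noise: "(\<lambda>n. (\<Sum>j<n. sampling_noise k G x j) / real n) \<longlonglongrightarrow> 0"
  shows "(\<lambda>n. (\<Sum>i=1..n. x i) / real n) \<longlonglongrightarrow> xs"
proof -
  define y where "y n = (\<Sum>i=1..n. x i) / real n" for n
  define W where "W n = (\<Sum>i=1..n. x i) - (\<Sum>j<n. sampling_noise k G x j)" for n
  have increment: "W (Suc n) - W n = (if k \<le> n then 2 * samp_prob k n G x - 1 else x (Suc n))" for n
    unfolding W_def sampling_noise_def by simp
  show ?thesis unfolding y_def[symmetric]
  proof (rule inward_map.tendsto_fixed_point_of_perturbed_recursion[where W = W and B = 1,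
        OF H _ _ _ _ xs unique])
    show "y n \<in> {-1..1}" for n
      using abs_sum_signs_le[of n x] x by (cases "n = 0") (auto simp: y_def abs_le_iff field_simps)
    show "(\<lambda>n. W n / real n - y n) \<longlonglongrightarrow> 0"
      using tendsto_minus[OF noise] by (simp add: W_def y_def diff_divide_distrib)
    show "\<bar>W (Suc n) - W n\<bar> \<le> 1" for n
      using samp_prob_in_unit[where k = k and G = G, OF G, of n x] x[of "Suc n"] unfolding increment
        by auto
    have "eventually (\<lambda>n. norm (W (Suc n) - W n - H_fun k G (y n))
        \<le> 2 * (1 - (\<Prod>l<k. 1 - real l / real n))) sequentially"
      using eventually_ge_at_top[of k]
    proof eventually_elim
      case (elim n)
      have "\<bar>2 * samp_prob k n G x - 1 - H_fun k G ((\<Sum>i=1..n. x i) / real n)\<bar>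
          \<le> 2 * (1 - (\<Prod>l<k. 1 - real l / real n))"
        using elim k x by (intro samp_prob_approx_H_fun G) auto
      then show ?case using elim unfolding increment y_def real_norm_def by simp
    qed
    moreover have "(\<lambda>n. 2 * (1 - (\<Prod>l<k. 1 - real l / real n))) \<longlonglongrightarrow> 0"
      using tendsto_mult[OF tendsto_const
          tendsto_diff[OF tendsto_const prod_one_minus_div_tendsto_1], of 2 1 k]
      by simp
    ultimately show "(\<lambda>n. W (Suc n) - W n - H_fun k G (y n)) \<longlonglongrightarrow> 0"
      by (rule Lim_null_comparison)
  qed
qed

locale sampling_walk = prob_space M
  for M :: "'w measure" +
  fixes F :: "nat \<Rightarrow> 'w measure" and X :: "nat \<Rightarrow> 'w \<Rightarrow> real" and k :: nat and G :: "real \<Rightarrow> real"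
  assumes k_pos: "1 \<le> k"
    and G_grid: "\<And>j. j \<le> k \<Longrightarrow> G (real j / real k) \<in> {0..1}"
    and subalgebra_F: "\<And>n. subalgebra M (F n)"
    and sets_F_mono: "\<And>n m. n \<le> m \<Longrightarrow> sets (F n) \<subseteq> sets (F m)"
    and adapted: "\<And>n. X n \<in> borel_measurable (F n)"
    and sign: "\<And>n \<omega>. 1 \<le> n \<Longrightarrow> \<omega> \<in> space M \<Longrightarrow> X n \<omega> \<in> {-1, 1}"
    and step: "\<And>n A. k \<le> n \<Longrightarrow> A \<in> sets (F n) \<Longrightarrow>
      measure M (A \<inter> {\<omega>\<in>space M. X (Suc n) \<omega> = 1}) =
      (\<integral>\<omega>. indicator A \<omega> * samp_prob k n G (\<lambda>i. X i \<omega>) \<partial>M)"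
begin

definition noise :: "nat \<Rightarrow> 'w \<Rightarrow> real" where
  "noise j \<omega> = sampling_noise k G (\<lambda>i. X i \<omega>) j"

lemma borel_measurable_X_F: "i \<le> n \<Longrightarrow> X i \<in> borel_measurable (F n)"
  using measurable_from_subalg[OF _ adapted] subalgebra_F sets_F_mono unfolding subalgebra_def
    by auto

lemma borel_measurable_samp_prob_F: "(\<lambda>\<omega>. samp_prob k n G (\<lambda>i. X i \<omega>)) \<in> borel_measurable (F n)"
  by (rule borel_measurable_samp_prob) (rule borel_measurable_X_F)

lemma integral_mult_noise: 
  assumes "V \<in> borel_measurable (F j)" "\<And>\<omega>. \<omega> \<in> space M \<Longrightarrow> \<bar>V \<omega>\<bar> \<le> C"
  shows "(\<integral>\<omega>. V \<omega> * noise j \<omega> \<partial>M) = 0"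
proof (cases "k \<le> j")
  case True
  have "(\<integral>\<omega>. V \<omega> * (X (Suc j) \<omega> - (2 * samp_prob k j G (\<lambda>i. X i \<omega>) - 1)) \<partial>M) = 0"
    by (rule integral_mult_sign_minus_cond_mean[OF subalgebra_F _ _ borel_measurable_samp_prob_F _ _
          assms])
      (use measurable_from_subalg[OF subalgebra_F adapted] sign
        samp_prob_in_unit[where k = k and G = G, OF G_grid]
        step True in auto)
  then show ?thesis using True by (simp add: noise_def sampling_noise_def)
qed (simp add: noise_def sampling_noise_def)

sublocale noise: bounded_martingale_differences M F noise 2
proof
  show "noise j \<in> borel_measurable (F (Suc j))" for j
  proof -
    have [measurable]: "X (Suc j) \<in> borel_measurable (F (Suc j))"
      by (rule adapted)
    have [measurable]: "(\<lambda>\<omega>. samp_prob k j G (\<lambda>i. X i \<omega>)) \<in> borel_measurable (F (Suc j))"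
      by (rule borel_measurable_samp_prob) (simp add: borel_measurable_X_F)
    show ?thesis unfolding noise_def sampling_noise_def by measurable
  qed
  show "\<bar>noise j \<omega>\<bar> \<le> 2" if "\<omega> \<in> space M" for j \<omega>
    using samp_prob_in_unit[where k = k and G = G, OF G_grid, of j] sign[of "Suc j" \<omega>] that
    unfolding noise_def sampling_noise_def by auto
qed (fact subalgebra_F sets_F_mono integral_mult_noise)+

lemma AE_average_tendsto_fixed_point:
  assumes H: "inward_map (H_fun k G)"
    and xs: "xs \<in> {-1..1}" and unique: "\<forall>y\<in>{-1..1}. H_fun k G y = y \<longrightarrow> y = xs"
  shows "AE \<omega> in M. (\<lambda>n. (\<Sum>i=1..n. X i \<omega>) / real n) \<longlonglongrightarrow> xs"
  using noise.AE_partial_sum_average_tendsto_0 AE_space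
proof eventually_elim
  case (elim \<omega>)
  show ?case
    by (rule average_tendsto_fixed_point_of_noise[OF k_pos G_grid _ H xs unique])
      (use elim sign in \<open>auto simp: noise.partial_sum_def noise_def\<close>)
qed

end

theorem theorem4p9:
  fixes M :: "'w measure" and F :: "nat \<Rightarrow> 'w measure"
    and X :: "nat \<Rightarrow> 'w \<Rightarrow> real"
    and q p :: real and k :: nat and f :: "real \<Rightarrow> real"
  assumes prob: "prob_space M"
    and q: "0 \<le> q" "q \<le> 1"
    and p: "0 < p" "p < 1" "p \<noteq> 1/2"
    and k: "k \<ge> 1"
    and f: "\<forall>x\<in>{0..1}. f x \<in> {0..1}"
    and filt_sub: "\<forall>n. subalgebra M (F n)"
    and filt_mono: "\<forall>n m. n \<le> m \<longrightarrow> sets (F n) \<subseteq> sets (F m)"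
    and adapted: "\<forall>n. X n \<in> borel_measurable (F n)"
    and X0: "\<forall>\<omega>\<in>space M. X 0 \<omega> = 0"
    and Xpm: "\<forall>n\<ge>1. \<forall>\<omega>\<in>space M. X n \<omega> \<in> {-1, 1}"
    and init_indep: "prob_space.indep_vars M (\<lambda>_. borel) X {1..k}"
    and init_law: "\<forall>i\<in>{1..k}. measure M {\<omega>\<in>space M. X i \<omega> = 1} = q"
    and step: "\<forall>n\<ge>k. \<forall>A\<in>sets (F n).
        measure M (A \<inter> {\<omega>\<in>space M. X (Suc n) \<omega> = 1}) =
        integral\<^sup>L M (\<lambda>\<omega>. indicator A \<omega> * samp_prob k n (g_fun p f) (\<lambda>i. X i \<omega>))"
    and A: "(p > 1/2 \<and> f 1 < p / (2*p - 1)) \<or> (p < 1/2 \<and> f 0 < (1 - p) / (1 - 2*p))"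
  shows
    "(\<forall>xs. xs \<in> {-1..1} \<and> H_fun k (g_fun p f) xs = xs \<and>
            (\<forall>y\<in>{-1..1}. H_fun k (g_fun p f) y = y \<longrightarrow> y = xs) \<longrightarrow>
          (AE \<omega> in M. (\<lambda>n. (\<Sum>i=1..n. X i \<omega>) / real n) \<longlonglongrightarrow> xs))
     \<and> ((strict_antimono_on {-1<..<1} (H_fun k (g_fun p f))
          \<or> strictly_convex_on {-1<..<1} (H_fun k (g_fun p f))
          \<or> strictly_concave_on {-1<..<1} (H_fun k (g_fun p f))
          \<or> contraction_on {-1<..<1} (H_fun k (g_fun p f))) \<longrightarrow>
        (\<exists>xs\<in>{-1<..<1}. H_fun k (g_fun p f) xs = xs \<and>
            (\<forall>y\<in>{-1<..<1}. H_fun k (g_fun p f) y = y \<longrightarrow> y = xs) \<and>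
            (AE \<omega> in M. (\<lambda>n. (\<Sum>i=1..n. X i \<omega>) / real n) \<longlonglongrightarrow> xs)))"
proof -
  let ?H = "H_fun k (g_fun p f)"
  interpret inward_map ?H
    using inward_map_H_fun_g_fun[OF p(1,2) f k] .
  interpret sampling_walk M F X k "g_fun p f"
    using sampling_walk_axioms.intro[OF k g_fun_grid_in_unit[OF p(1,2) f] filt_sub[rule_format]
        filt_mono[rule_format] adapted[rule_format] Xpm[rule_format] step[rule_format]]
    by (rule sampling_walk.intro[OF prob])
  have limit: "AE \<omega> in M. (\<lambda>n. (\<Sum>i=1..n. X i \<omega>) / real n) \<longlonglongrightarrow> xs"
    if "xs \<in> {-1..1}" "\<forall>y\<in>{-1..1}. ?H y = y \<longrightarrow> y = xs" for xs
    by (rule AE_average_tendsto_fixed_point[OF inward_map_axioms that])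
  show ?thesis
  proof (intro conjI allI impI)
    fix xs assume "xs \<in> {-1..1} \<and> ?H xs = xs \<and> (\<forall>y\<in>{-1..1}. ?H y = y \<longrightarrow> y = xs)"
    then show "AE \<omega> in M. (\<lambda>n. (\<Sum>i=1..n. X i \<omega>) / real n) \<longlonglongrightarrow> xs"
      using limit by blast
  next
    assume "strict_antimono_on {-1<..<1} ?H \<or> strictly_convex_on {-1<..<1} ?H
      \<or> strictly_concave_on {-1<..<1} ?H \<or> contraction_on {-1<..<1} ?H"
    then obtain z where "z \<in> {-1<..<1}" "?H z = z" and unique: "\<forall>y\<in>{-1..1}. ?H y = y \<longrightarrow> y = z"
      using unique_fixed_point_exists by blast
    moreover have "AE \<omega> in M. (\<lambda>n. (\<Sum>i=1..n. X i \<omega>) / real n) \<longlonglongrightarrow> z"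
      using limit[OF _ unique] \<open>z \<in> {-1<..<1}\<close> by simp
    ultimately show "\<exists>xs\<in>{-1<..<1}. ?H xs = xs \<and> (\<forall>y\<in>{-1<..<1}. ?H y = y \<longrightarrow> y = xs) \<and>
        (AE \<omega> in M. (\<lambda>n. (\<Sum>i=1..n. X i \<omega>) / real n) \<longlonglongrightarrow> xs)"
      by auto
  qed
qed

end
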